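(* Let $p$ be a prime number and $n\in\mathbb N$. Suppose one of the following holds: (i) $A$ is a Lagrangian in $\mathbb Z_n\times\mathbb Z_n$; (ii) $A\subseteq\mathbb Z_p\times\mathbb Z_p$ complements some Lagrangian of $\mathbb Z_p\times\mathbb Z_p$ (here the ambient group is $\mathbb Z_p\times\mathbb Z_p$); (iii) $A\subseteq\mathbb Z_{p^2}\times\mathbb Z_{p^2}$ complements the non-cyclic Lagrangian $p\mathbb Z_{p^2}\times p\mathbb Z_{p^2}$ of $\mathbb Z_{p^2}\times\mathbb Z_{p^2}$ (here the ambient group is $\mathbb Z_{p^2}\times\mathbb Z_{p^2}$). Then, in the respective ambient group $G$, for every $B\subseteq G$ such that $(A,B)$ is a tiling pair, $(B,A)$ is a symplectic spectral pair (i.e. $A$ is a symplectic spectrum of $B$); and for every $S\subseteq G$ such that $(A,S)$ is a symplectic spectral pair, $(A,S)$ is a tiling pair (i.e. $A$ is a tiling complement of $S$).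
   Context: Let $G=\mathbb Z_N\times\mathbb Z_N$ ($N=n$, $p$ or $p^2$ according to the case). The symplectic form is $\langle x,y\rangle_s=x_1y_2-x_2y_1$ for $x=(x_1,x_2),y=(y_1,y_2)\in G$. For $H\subseteq G$, $H^{\perp_s}=\{g\in G:\langle g,h\rangle_s=0\ \forall h\in H\}$; $H$ is a Lagrangian if $H=H^{\perp_s}$ (equivalently, $H$ is a subgroup of order $N$). A pair $(A,B)$ of subsets of $G$ is a tiling pair (and $A,B$ complement each other) if $\{A+b\}_{b\in B}$ is a partition of $G$. A pair $(A,S)$ of subsets of $G$ is a symplectic spectral pair ($S$ is a symplectic spectrum of $A$) if the functions $\{a\mapsto e^{\frac{2\pi i}{N}\langle a,s\rangle_s}\}_{s\in S}$ form an orthogonal basis of $L^2(A)$ with respect to counting measure on $A$. *)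

theory Defs
  imports "HOL-Analysis.Analysis"
begin

(* The group Z_N x Z_N, elements represented by canonical residues in {0..<N} *)
definition grp :: "nat \<Rightarrow> (int \<times> int) set" where
  "grp N = {0..<int N} \<times> {0..<int N}"

definition gadd :: "nat \<Rightarrow> int \<times> int \<Rightarrow> int \<times> int \<Rightarrow> int \<times> int" where
  "gadd N x y = ((fst x + fst y) mod int N, (snd x + snd y) mod int N)"

(* symplectic form <x,y>_s = x1 y2 - x2 y1 (as an integer; reduced mod N where relevant) *)
definition symp :: "int \<times> int \<Rightarrow> int \<times> int \<Rightarrow> int" where
  "symp x y = fst x * snd y - snd x * fst y"

definition symp_perp :: "nat \<Rightarrow> (int \<times> int) set \<Rightarrow> (int \<times> int) set" where
  "symp_perp N H = {g \<in> grp N. \<forall>h\<in>H. int N dvd symp g h}"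

definition lagrangian :: "nat \<Rightarrow> (int \<times> int) set \<Rightarrow> bool" where
  "lagrangian N H \<longleftrightarrow> H \<subseteq> grp N \<and> H = symp_perp N H"

definition tiling_pair :: "nat \<Rightarrow> (int \<times> int) set \<Rightarrow> (int \<times> int) set \<Rightarrow> bool" where
  "tiling_pair N A B \<longleftrightarrow> A \<subseteq> grp N \<and> B \<subseteq> grp N \<and>
     (\<forall>g\<in>grp N. \<exists>!ab. fst ab \<in> A \<and> snd ab \<in> B \<and> gadd N (fst ab) (snd ab) = g)"

definition schar :: "nat \<Rightarrow> int \<times> int \<Rightarrow> int \<times> int \<Rightarrow> complex" where
  "schar N s a = exp (2 * pi * \<i> * of_int (symp a s) / of_nat N)"

(* the functions {schar N s}_{s in S} form an orthogonal basis of L^2(A), counting measure *)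
definition symp_spectral_pair :: "nat \<Rightarrow> (int \<times> int) set \<Rightarrow> (int \<times> int) set \<Rightarrow> bool" where
  "symp_spectral_pair N A S \<longleftrightarrow> A \<subseteq> grp N \<and> S \<subseteq> grp N \<and>
     (\<forall>s\<in>S. \<forall>t\<in>S. s \<noteq> t \<longrightarrow> (\<Sum>a\<in>A. schar N s a * cnj (schar N t a)) = 0) \<and>
     (\<forall>c :: int \<times> int \<Rightarrow> complex. (\<forall>a\<in>A. (\<Sum>s\<in>S. c s * schar N s a) = 0) \<longrightarrow> (\<forall>s\<in>S. c s = 0)) \<and>
     (\<forall>f :: int \<times> int \<Rightarrow> complex. \<exists>c :: int \<times> int \<Rightarrow> complex.
         \<forall>a\<in>A. f a = (\<Sum>s\<in>S. c s * schar N s a))"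

definition tiling_spectral_dual :: "nat \<Rightarrow> (int \<times> int) set \<Rightarrow> bool" where
  "tiling_spectral_dual N A \<longleftrightarrow>
     (\<forall>B \<subseteq> grp N. tiling_pair N A B \<longrightarrow> symp_spectral_pair N B A) \<and>
     (\<forall>S \<subseteq> grp N. symp_spectral_pair N A S \<longrightarrow> tiling_pair N A S)"

end

(*
  Write e(t) = exp(2 pi i t / N) and F(d) = sum_{x in A} e(<x, d>). In all three cases
  |A| = N and F(a - a') <> 0 for distinct a, a' in A; these two facts alone give the duality.
  If A and B tile G, then for d <> 0 the vanishing sum of e(<g, d>) over G factors as F(d)
  times the corresponding sum over B, so the characters indexed by A are orthogonal on B, and
  a square orthogonal family of unimodular functions is a basis. Conversely, if S is a spectrum
  of A and a + s = a' + s' with s <> s', then orthogonality of the characters s, s' on A says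
  F(a' - a) = 0; hence the sums a + s are distinct and A + S = G by counting.

  For a Lagrangian, F(a - a') = N. In the other two cases F(a - a') = sum_i c_i w^i, where w is
  a primitive root of unity of order q = p resp. p^2 and c_i counts the x in A with
  <x, a - a'> = i (mod q); the terms at x = a and x = a' coincide, so some c_i >= 2. Since the
  cyclotomic polynomial of order q is irreducible (Eisenstein), a vanishing such sum forces
  c_i = c_(i + q/p). With |A| = p this makes every c_i equal to 1. With |A| = p^2 it puts at
  least 2p points of A on one line <x, a - a'> = r (mod p), whereas a complement of pZ x pZ
  meets each such line in at most p points.
*)

theory Submission
  imports Defs "HOL-Computational_Algebra.Polynomial_Factorial"
begin

section \<open>Roots of unity\<close>

definition unit_root :: "nat \<Rightarrow> int \<Rightarrow> complex" where
  "unit_root N m = exp (2 * pi * \<i> * of_int m / of_nat N)"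

lemma unit_root_add: "unit_root N (a + b) = unit_root N a * unit_root N b"
  unfolding unit_root_def by (simp add: exp_add[symmetric] distrib_left add_divide_distrib)

lemma unit_root_0 [simp]: "unit_root N 0 = 1"
  unfolding unit_root_def by simp

lemma unit_root_minus: "unit_root N (- a) = cnj (unit_root N a)"
  unfolding unit_root_def by (simp add: exp_cnj)

lemma unit_root_diff: "unit_root N (a - b) = unit_root N a * cnj (unit_root N b)"
  using unit_root_add[of N a "- b"] by (simp add: unit_root_minus)

lemma norm_unit_root [simp]: "norm (unit_root N a) = 1"
  unfolding unit_root_def by (simp add: norm_exp_eq_Re)

lemma unit_root_mult_cnj [simp]: "unit_root N a * cnj (unit_root N a) = 1"
  by (metis complex_norm_square norm_unit_root mult.commute of_real_1 power_one)

lemma unit_root_eq_1_iff: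
  assumes "N > 0"
  shows "unit_root N m = 1 \<longleftrightarrow> int N dvd m"
proof -
  have "unit_root N m = 1 \<longleftrightarrow> (\<exists>n::int. 2 * pi * of_int m / of_nat N = of_int (2 * n) * pi)"
    unfolding unit_root_def exp_eq_1 by (simp add: field_simps)
  also have "\<dots> \<longleftrightarrow> (\<exists>n::int. of_int m = of_int (n * int N) * (1::real))"
    using assms by (auto simp: field_simps)
  also have "\<dots> \<longleftrightarrow> int N dvd m"
    by (auto simp: dvd_def mult.commute simp del: of_int_mult)
  finally show ?thesis .
qed

lemma unit_root_cong:
  assumes "N > 0" "int N dvd a - b"
  shows "unit_root N a = unit_root N b"
proof -
  have "unit_root N (a - b) = 1" using assms unit_root_eq_1_iff by blast
  then show ?thesis using unit_root_add[of N "a - b" b] by simp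
qed

lemma unit_root_mod: "N > 0 \<Longrightarrow> unit_root N (a mod int N) = unit_root N a"
  by (rule unit_root_cong) (auto simp: mod_eq_dvd_iff[symmetric])

lemma unit_root_of_nat_mult: "unit_root N (int k * a) = unit_root N a ^ k"
proof -
  have "unit_root N (int k * a) = exp (of_nat k * (2 * pi * \<i> * of_int a / of_nat N))"
    unfolding unit_root_def by (simp add: mult_ac)
  also have "\<dots> = unit_root N a ^ k" unfolding unit_root_def by (rule exp_of_nat_mult)
  finally show ?thesis .
qed

lemma unit_root_1_power: "unit_root N 1 ^ k = unit_root N (int k)"
  using unit_root_of_nat_mult[of N k 1] by simp

lemma sum_unit_root_multiples:
  assumes N: "N > 0" and e: "\<not> int N dvd e"
  shows "(\<Sum>g\<in>{0..<int N}. unit_root N (g * e)) = 0"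
proof -
  have "{0..<int N} = int ` {..<N}"
    by (simp add: image_int_atLeastLessThan lessThan_atLeast0)
  then have "(\<Sum>g\<in>{0..<int N}. unit_root N (g * e)) = (\<Sum>k<N. unit_root N e ^ k)"
    by (simp add: sum.reindex unit_root_of_nat_mult)
  moreover have "unit_root N e ^ N = 1"
    using unit_root_eq_1_iff[OF N] by (simp flip: unit_root_of_nat_mult)
  moreover have "unit_root N e \<noteq> 1" using unit_root_eq_1_iff[OF N] e by simp
  ultimately show ?thesis by (simp add: sum_gp_strict)
qed

lemma sum_unit_root_by_residues:
  assumes q: "q > 0" and X: "finite X"
  shows "(\<Sum>x\<in>X. unit_root q (f x)) =
    (\<Sum>i<q. of_nat (card {x\<in>X. f x mod int q = int i}) * unit_root q 1 ^ i)"
proof -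
  have fibre: "{x\<in>X. nat (f x mod int q) = i} = {x\<in>X. f x mod int q = int i}" for i
    using q by auto
  have "(\<Sum>x\<in>X. unit_root q (f x)) = (\<Sum>x\<in>X. unit_root q 1 ^ nat (f x mod int q))"
    using q by (simp add: unit_root_1_power unit_root_mod)
  also have "\<dots> = (\<Sum>i<q. \<Sum>x\<in>{x\<in>X. nat (f x mod int q) = i}. unit_root q 1 ^ nat (f x mod int q))"
    using X q by (intro sum.group[symmetric]) (auto simp: nat_less_iff)
  also have "\<dots> = (\<Sum>i<q. of_nat (card {x\<in>X. f x mod int q = int i}) * unit_root q 1 ^ i)"
    by (simp add: fibre)
  finally show ?thesis .
qed

lemma sum_card_residue_fibres:
  assumes q: "q > 0" and X: "finite X"
  shows "(\<Sum>i<q. card {x\<in>X. f x mod int q = int i}) = card X"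
proof -
  have fibre: "{x\<in>X. nat (f x mod int q) = i} = {x\<in>X. f x mod int q = int i}" for i
    using q by auto
  have "card X = (\<Sum>x\<in>X. 1::nat)" by simp
  also have "\<dots> = (\<Sum>i<q. \<Sum>x\<in>{x\<in>X. nat (f x mod int q) = i}. 1)"
    using X q by (intro sum.group[symmetric]) (auto simp: nat_less_iff)
  finally show ?thesis by (simp add: fibre)
qed

lemma card_residue_fibre_ge_2:
  assumes X: "finite X" and q: "q > 0" and a: "a \<in> X" "a' \<in> X" "a \<noteq> a'" "f a = f a'"
  shows "card {x\<in>X. f x mod int q = int (nat (f a mod int q))} \<ge> 2"
proof -
  have "{a, a'} \<subseteq> {x\<in>X. f x mod int q = int (nat (f a mod int q))}"
    using a q by auto
  from card_mono[OF _ this] show ?thesis using X a by simp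
qed


section \<open>The cyclotomic polynomial of prime power order\<close>

abbreviation ipoly :: "int poly \<Rightarrow> complex \<Rightarrow> complex" where
  "ipoly P \<equiv> poly (map_poly of_int P)"

lemma ipoly_add: "ipoly (P + Q) x = ipoly P x + ipoly Q x"
proof -
  have "map_poly of_int (P + Q) = map_poly of_int P + (map_poly of_int Q :: complex poly)"
    by (rule poly_eqI) (simp add: coeff_map_poly)
  then show ?thesis by simp
qed

lemma ipoly_diff: "ipoly (P - Q) x = ipoly P x - ipoly Q x"
proof -
  have "map_poly of_int (P - Q) = map_poly of_int P - (map_poly of_int Q :: complex poly)"
    by (rule poly_eqI) (simp add: coeff_map_poly)
  then show ?thesis by simp
qed

lemma ipoly_mult: "ipoly (P * Q) x = ipoly P x * ipoly Q x"
proof -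
  have "map_poly of_int (P * Q) = map_poly of_int P * (map_poly of_int Q :: complex poly)"
    by (rule poly_eqI) (simp add: coeff_map_poly coeff_mult)
  then show ?thesis by simp
qed

lemma ipoly_smult: "ipoly (smult a P) x = of_int a * ipoly P x"
proof -
  have "map_poly of_int (smult a P) = smult (of_int a) (map_poly of_int P :: complex poly)"
    by (rule poly_eqI) (simp add: coeff_map_poly)
  then show ?thesis by simp
qed

lemma ipoly_monom: "ipoly (monom a n) x = of_int a * x ^ n"
  by (simp add: map_poly_monom poly_monom)

lemma ipoly_sum: "ipoly (\<Sum>i\<in>I. P i) x = (\<Sum>i\<in>I. ipoly (P i) x)"
  by (induction I rule: infinite_finite_induct) (simp_all add: ipoly_add)

lemma prime_dvd_prime_power_choose:
  fixes p :: nat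
  assumes p: "prime p" and j: "0 < j" "j < p ^ k"
  shows "p dvd (p ^ k choose j)"
proof (rule ccontr)
  assume not_dvd: "\<not> p dvd (p ^ k choose j)"
  obtain j' where j': "j = Suc j'" using j by (cases j) auto
  obtain n' where n': "p ^ k = Suc n'" using p by (cases "p ^ k") (auto simp: prime_gt_0_nat)
  have "p ^ k dvd (p ^ k choose j) * j"
    using Suc_times_binomial_eq[of n' j'] n' j' by (metis dvd_triv_left)
  moreover have "coprime (p ^ k) (p ^ k choose j)"
    using not_dvd p by (simp add: coprime_power_left_iff prime_imp_coprime)
  ultimately have "p ^ k dvd j" by (metis coprime_dvd_mult_right_iff)
  then show False using j by (simp add: nat_dvd_not_less)
qed

lemma prime_dvd_linear_power_minus:
  assumes p: "prime p"
  shows "[:int p:] dvd [:1, 1:] ^ (p ^ k) - monom 1 (p ^ k) - 1"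
  unfolding const_poly_dvd_iff
proof
  fix i
  have pk: "p ^ k > 0" using p by (simp add: prime_gt_0_nat)
  have coeff_power: "coeff ([:1, 1:] ^ n :: int poly) j = int (n choose j)" for n j
    by (cases "j \<le> n") (simp_all add: coeff_linear_poly_power coeff_eq_0 degree_linear_power)
  consider "i = 0" | "i = p ^ k" | "0 < i \<and> i < p ^ k" | "i > p ^ k" by linarith
  then show "int p dvd coeff ([:1, 1:] ^ (p ^ k) - monom 1 (p ^ k) - 1) i"
  proof cases
    case 3
    then have "p dvd (p ^ k choose i)" using prime_dvd_prime_power_choose[OF p] by simp
    with 3 show ?thesis by (simp add: coeff_power coeff_monom coeff_1)
  qed (use pk in \<open>simp_all add: coeff_power coeff_monom coeff_1 binomial_eq_0\<close>)
qed

lemma eisenstein_criterion: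
  fixes f g h :: "int poly" and p :: int
  assumes p: "prime p" and f: "f = g * h" and degree: "degree g \<ge> 1" "degree h \<ge> 1"
    and lead: "\<not> p dvd lead_coeff f"
    and lower: "\<And>i. i < degree f \<Longrightarrow> p dvd coeff f i"
    and const: "\<not> p ^ 2 dvd coeff f 0"
  shows False
proof -
  have no_factor: False
    if gh: "f = g * h" "degree g \<ge> 1" "degree h \<ge> 1" and g0: "p dvd coeff g 0" for g h
  proof -
    have degree_f: "degree f = degree g + degree h"
      using gh by (auto intro: degree_mult_eq)
    have "coeff f 0 = coeff g 0 * coeff h 0" using gh(1) by (simp add: coeff_mult)
    then have "\<not> p dvd coeff h 0"
      using g0 const by (metis mult_dvd_mono power2_eq_square)
    have "p dvd coeff g i" if "i \<le> degree g" for i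
      using that
    proof (induction i rule: less_induct)
      case (less i)
      have "coeff f i = coeff g i * coeff h 0 + (\<Sum>j<i. coeff g j * coeff h (i - j))"
        using gh(1) by (simp add: coeff_mult lessThan_Suc_atMost[symmetric])
      moreover have "p dvd coeff f i" using less.prems gh(3) degree_f by (intro lower) linarith
      moreover have "p dvd (\<Sum>j<i. coeff g j * coeff h (i - j))"
        using less by (intro dvd_sum) simp
      ultimately have "p dvd coeff g i * coeff h 0" by (metis dvd_add_left_iff)
      with \<open>\<not> p dvd coeff h 0\<close> show ?case using p by (simp add: prime_dvd_mult_iff)
    qed
    then have "p dvd lead_coeff f" using gh(1) by (simp add: lead_coeff_mult)
    with lead show False ..
  qed
  have "g \<noteq> 0" "h \<noteq> 0" using degree by auto
  then have "degree f > 0" using f degree by (simp add: degree_mult_eq)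
  then have "p dvd coeff g 0 * coeff h 0" using lower[of 0] f by (simp add: coeff_mult)
  then consider "p dvd coeff g 0" | "p dvd coeff h 0" using p by (auto simp: prime_dvd_mult_iff)
  then show False
    by cases (use no_factor[of g h] no_factor[of h g] f degree in \<open>simp_all add: mult.commute\<close>)
qed

text \<open>\<open>\<Phi>\<^sub>p(x\<^sup>m)\<close>; for \<open>m\<close> a power of the prime \<open>p\<close> this is the cyclotomic polynomial \<open>\<Phi>\<^sub>p\<^sub>m\<close>.\<close>

definition cyclo :: "nat \<Rightarrow> nat \<Rightarrow> int poly" where
  "cyclo p m = (\<Sum>j<p. monom 1 (j * m))"

lemma cyclo_times_monom_minus_1: "cyclo p m * (monom 1 m - 1) = monom 1 (p * m) - 1"
proof -
  have "cyclo p m * (monom 1 m - 1) = (\<Sum>j<p. monom 1 (Suc j * m) - monom 1 (j * m))"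
    unfolding cyclo_def sum_distrib_right
    by (intro sum.cong refl) (simp add: right_diff_distrib mult_monom add.commute)
  also have "\<dots> = monom 1 (p * m) - monom 1 (0 * m)"
    by (rule sum_lessThan_telescope)
  finally show ?thesis by (simp add: one_pCons)
qed

lemma coeff_cyclo:
  assumes "m > 0"
  shows "coeff (cyclo p m) i = (if m dvd i \<and> i div m < p then 1 else 0)"
proof -
  have "coeff (cyclo p m) i = (\<Sum>j<p. if j * m = i then 1 else 0)"
    unfolding cyclo_def coeff_sum by (simp add: coeff_monom)
  also have "\<dots> = (\<Sum>j<p. if j = i div m then (if m dvd i then 1 else 0) else 0)"
    using assms by (intro sum.cong refl) auto
  finally show ?thesis by (simp add: sum.delta)
qed

lemma
  assumes "m > 0" "p > 0"
  shows degree_cyclo: "degree (cyclo p m) = (p - 1) * m"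
    and lead_coeff_cyclo: "lead_coeff (cyclo p m) = 1"
proof -
  have top: "coeff (cyclo p m) ((p - 1) * m) = 1" using assms by (simp add: coeff_cyclo)
  have "degree (cyclo p m) \<le> (p - 1) * m"
  proof (rule degree_le, intro allI impI)
    fix i assume i: "(p - 1) * m < i"
    then have "\<not> (m dvd i \<and> i div m < p)"
      using assms by (auto elim!: dvdE simp: mult.commute)
    then show "coeff (cyclo p m) i = 0" using assms by (simp add: coeff_cyclo)
  qed
  moreover have "(p - 1) * m \<le> degree (cyclo p m)" using top by (intro le_degree) simp
  ultimately show "degree (cyclo p m) = (p - 1) * m" by simp
  with top show "lead_coeff (cyclo p m) = 1" by simp
qed

lemma content_cyclo:
  assumes "m > 0" "p > 0"
  shows "content (cyclo p m) = 1"
  using content_dvd_coeff[of "cyclo p m" "degree (cyclo p m)"] lead_coeff_cyclo[OF assms]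
  by (simp flip: is_unit_content_iff)

lemma poly_cyclo_1: "poly (cyclo p m) 1 = int p"
  unfolding cyclo_def by (simp add: poly_sum poly_monom)

lemma ipoly_cyclo_unit_root:
  assumes p: "p > 1" and m: "m > 0"
  shows "ipoly (cyclo p m) (unit_root (p * m) 1) = 0"
proof -
  let ?w = "unit_root (p * m) 1"
  have pm: "p * m > 0" using p m by simp
  have "?w ^ (p * m) = 1" by (simp add: unit_root_1_power unit_root_eq_1_iff[OF pm])
  moreover have "\<not> int (p * m) dvd int m"
  proof
    assume "int (p * m) dvd int m"
    then have "p * m \<le> m" using m by (simp add: dvd_imp_le)
    with p m show False by simp
  qed
  then have "?w ^ m \<noteq> 1" by (simp add: unit_root_1_power unit_root_eq_1_iff[OF pm])
  moreover have "ipoly (cyclo p m) ?w * (?w ^ m - 1) = ?w ^ (p * m) - 1"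
    using arg_cong[OF cyclo_times_monom_minus_1[of p m], of "\<lambda>P. ipoly P ?w"]
    by (simp add: ipoly_mult ipoly_diff ipoly_monom)
  ultimately show ?thesis by simp
qed

lemma monom_pcompose_linear: "monom 1 n \<circ>\<^sub>p [:1, 1:] = ([:1, 1:] ^ n :: int poly)"
proof -
  have "(q ^ n) \<circ>\<^sub>p r = (q \<circ>\<^sub>p r) ^ n" for q r :: "int poly"
    by (induction n) (simp_all add: pcompose_mult pcompose_1)
  moreover have "[:0, 1:] \<circ>\<^sub>p [:1, 1:] = ([:1, 1:] :: int poly)"
    by (simp add: pcompose_pCons)
  ultimately show ?thesis by (simp add: monom_altdef)
qed

lemma cyclo_shift_eisenstein:
  fixes p k :: nat
  assumes p: "prime p"
  defines "F \<equiv> cyclo p (p ^ k) \<circ>\<^sub>p [:1, 1:]"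
  shows "lead_coeff F = 1" "coeff F 0 = int p" "\<And>i. i < degree F \<Longrightarrow> int p dvd coeff F i"
proof -
  define m where "m = p ^ k"
  have p0: "p > 0" and m0: "m > 0" using p by (auto simp: m_def prime_gt_0_nat)
  have degree_F: "degree F = (p - 1) * m"
    by (simp add: F_def m_def degree_pcompose degree_cyclo[OF m0[unfolded m_def] p0])
  show "lead_coeff F = 1"
    unfolding F_def using lead_coeff_cyclo[OF m0 p0] degree_cyclo[OF m0 p0]
    by (subst lead_coeff_comp) (simp_all add: m_def)
  show "coeff F 0 = int p"
    by (simp add: F_def coeff_pcompose_0 poly_cyclo_1)
  fix i assume i: "i < degree F"
  define D1 :: "int poly" where "D1 = [:1, 1:] ^ m - monom 1 m - 1"
  define D2 :: "int poly" where "D2 = [:1, 1:] ^ (p * m) - monom 1 (p * m) - 1"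
  have "[:int p:] dvd D1" unfolding D1_def m_def by (rule prime_dvd_linear_power_minus[OF p])
  moreover have "[:int p:] dvd D2"
    unfolding D2_def m_def using prime_dvd_linear_power_minus[OF p, of "Suc k"] by simp
  ultimately have "[:int p:] dvd D2 - F * D1" by simp
  have "F * ([:1, 1:] ^ m - 1) = [:1, 1:] ^ (p * m) - 1"
    using arg_cong[OF cyclo_times_monom_minus_1[of p m], of "\<lambda>P. P \<circ>\<^sub>p [:1, 1:]"]
    by (simp add: F_def m_def pcompose_mult pcompose_diff monom_pcompose_linear pcompose_1)
  then have shifted: "monom 1 m * F = monom 1 (p * m) + (D2 - F * D1)"
    by (simp add: D1_def D2_def algebra_simps)
  have "m + i < p * m" using i degree_F p0
    by (metis Suc_diff_1 add_less_cancel_left mult_Suc)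
  have "coeff F i = coeff (monom 1 m * F) (m + i)" by (simp add: coeff_monom_mult)
  also have "\<dots> = coeff (D2 - F * D1) (m + i)"
    using \<open>m + i < p * m\<close> by (simp only: shifted coeff_add coeff_monom) simp
  finally have "coeff F i = coeff (D2 - F * D1) (m + i)" .
  with \<open>[:int p:] dvd D2 - F * D1\<close> show "int p dvd coeff F i" by (simp add: const_poly_dvd_iff)
qed

lemma cyclo_prime_power_factor_degree:
  assumes p: "prime p" and gh: "cyclo p (p ^ k) = g * h"
  shows "degree g = 0 \<or> degree h = 0"
proof (rule ccontr)
  assume "\<not> (degree g = 0 \<or> degree h = 0)"
  then have "degree (g \<circ>\<^sub>p [:1, 1:]) \<ge> 1" "degree (h \<circ>\<^sub>p [:1, 1:]) \<ge> 1"
    by (simp_all add: degree_pcompose)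
  moreover have "cyclo p (p ^ k) \<circ>\<^sub>p [:1, 1:] = (g \<circ>\<^sub>p [:1, 1:]) * (h \<circ>\<^sub>p [:1, 1:])"
    by (simp add: gh pcompose_mult)
  moreover have "\<not> int p ^ 2 dvd int p"
  proof
    assume "int p ^ 2 dvd int p"
    then have "p * p \<le> p" using p by (simp add: power2_eq_square dvd_imp_le prime_gt_0_nat)
    with p show False using prime_gt_1_nat[OF p] by simp
  qed
  moreover have "\<not> int p dvd 1" using p by (simp add: prime_nat_iff)
  ultimately show False
    using cyclo_shift_eisenstein[OF p, where k = k] p
    by (intro eisenstein_criterion[of "int p" "cyclo p (p ^ k) \<circ>\<^sub>p [:1, 1:]"
          "g \<circ>\<^sub>p [:1, 1:]" "h \<circ>\<^sub>p [:1, 1:]"]) simp_all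
qed

lemma dvd_if_dvd_smult_primitive:
  fixes T Q :: "int poly"
  assumes "content T = 1" "content Q = 1" "a \<noteq> 0" "T dvd smult a Q"
  shows "T dvd Q"
proof -
  have "primitive_part T dvd primitive_part (smult a Q)"
    by (rule primitive_part_dvd_primitive_partI) fact
  then have "T dvd smult (unit_factor a) Q"
    using assms(1,2) by (simp add: primitive_part_smult primitive_part_prim)
  then have "T dvd smult (unit_factor a) (smult (unit_factor a) Q)" by (rule dvd_smult)
  then show ?thesis using assms(3) by (simp add: sgn_if split: if_splits)
qed

lemma degree_eq_if_dvd_cyclo_root:
  assumes p: "prime p" and "T dvd cyclo p (p ^ k)" "T \<noteq> 0"
    and root: "ipoly T (unit_root (p * p ^ k) 1) = 0"
  shows "degree T = degree (cyclo p (p ^ k))"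
proof -
  have p0: "p > 0" using p by (simp add: prime_gt_0_nat)
  obtain G where G: "cyclo p (p ^ k) = T * G" using \<open>T dvd _\<close> by (elim dvdE)
  then consider "degree T = 0" | "degree G = 0"
    by (meson cyclo_prime_power_factor_degree[OF p])
  then show ?thesis
  proof cases
    case 1
    then have T_const: "T = [:coeff T 0:]" by (rule degree_0_id[symmetric])
    with \<open>T \<noteq> 0\<close> have "coeff T 0 \<noteq> 0" by auto
    moreover have "ipoly T (unit_root (p * p ^ k) 1) = of_int (coeff T 0)"
      using ipoly_monom[of "coeff T 0" 0] T_const by (simp add: monom_0)
    ultimately show ?thesis using root by simp
  next
    case 2
    have "G \<noteq> 0" using G lead_coeff_cyclo[of "p ^ k" p] p0 by auto
    with G 2 \<open>T \<noteq> 0\<close> show ?thesis by (simp add: degree_mult_eq)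
  qed
qed

lemma degree_cyclo_le_if_ipoly_root:
  fixes P :: "int poly"
  assumes p: "prime p" and "P \<noteq> 0" and "ipoly P (unit_root (p * p ^ k) 1) = 0"
  shows "degree (cyclo p (p ^ k)) \<le> degree P"
  using assms(2,3)
proof (induction "degree P" arbitrary: P rule: less_induct)
  case less
  let ?\<Phi> = "cyclo p (p ^ k)" and ?w = "unit_root (p * p ^ k) 1"
  have p0: "p > 0" using p by (simp add: prime_gt_0_nat)
  define T where "T = primitive_part P"
  have T0: "T \<noteq> 0" and degree_T: "degree T = degree P" and content_T: "content T = 1"
    using less.prems by (simp_all add: T_def content_primitive_part)
  have "ipoly P ?w = of_int (content P) * ipoly T ?w"
    by (metis T_def content_times_primitive_part ipoly_smult)
  then have T_root: "ipoly T ?w = 0" using less.prems by simp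
  obtain a Q where a: "a \<noteq> 0" and div: "smult a ?\<Phi> = T * Q + pseudo_mod ?\<Phi> T"
    using pseudo_mod(1)[OF T0] by blast
  show ?case
  proof (cases "pseudo_mod ?\<Phi> T = 0")
    case True
    have "content ?\<Phi> = 1" using p0 by (simp add: content_cyclo)
    moreover have "T dvd smult a ?\<Phi>" using div True by simp
    ultimately have "T dvd ?\<Phi>" by (rule dvd_if_dvd_smult_primitive[OF content_T _ a])
    with degree_eq_if_dvd_cyclo_root[OF p _ T0 T_root] degree_T show ?thesis by simp
  next
    case False
    have "ipoly (pseudo_mod ?\<Phi> T) ?w = 0"
      using arg_cong[OF div, of "\<lambda>P. ipoly P ?w"] T_root
        ipoly_cyclo_unit_root[of p "p ^ k"] prime_gt_1_nat[OF p] p0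
      by (simp add: ipoly_add ipoly_mult ipoly_smult)
    then have "degree ?\<Phi> \<le> degree (pseudo_mod ?\<Phi> T)"
      using less.hyps False degree_pseudo_mod_less[OF T0 False] degree_T by simp
    with degree_pseudo_mod_less[OF T0 False] degree_T show ?thesis by simp
  qed
qed

lemma cyclo_dvd_if_ipoly_root:
  fixes P :: "int poly"
  assumes p: "prime p" and root: "ipoly P (unit_root (p * p ^ k) 1) = 0"
  shows "cyclo p (p ^ k) dvd P"
proof -
  let ?\<Phi> = "cyclo p (p ^ k)" and ?w = "unit_root (p * p ^ k) 1"
  have p0: "p > 0" using p by (simp add: prime_gt_0_nat)
  have monic: "lead_coeff ?\<Phi> = 1" using lead_coeff_cyclo[of "p ^ k" p] p0 by simp
  then have \<Phi>0: "?\<Phi> \<noteq> 0" by auto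
  obtain a Q where a: "a \<noteq> 0" and div: "smult a P = ?\<Phi> * Q + pseudo_mod P ?\<Phi>"
    using pseudo_mod(1)[OF \<Phi>0] by blast
  have "pseudo_mod P ?\<Phi> = 0"
  proof (rule ccontr)
    assume R0: "pseudo_mod P ?\<Phi> \<noteq> 0"
    have "ipoly (pseudo_mod P ?\<Phi>) ?w = 0"
      using arg_cong[OF div, of "\<lambda>P. ipoly P ?w"] root
        ipoly_cyclo_unit_root[of p "p ^ k"] prime_gt_1_nat[OF p] p0
      by (simp add: ipoly_add ipoly_mult ipoly_smult)
    then have "degree ?\<Phi> \<le> degree (pseudo_mod P ?\<Phi>)"
      using degree_cyclo_le_if_ipoly_root[OF p R0] by simp
    with degree_pseudo_mod_less[OF \<Phi>0 R0] show False by simp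
  qed
  then have "?\<Phi> dvd smult a P" using div by simp
  from dvd_monic[OF monic this a] show ?thesis .
qed


section \<open>Vanishing sums of roots of unity of prime power order\<close>

lemma vanishing_unit_root_sum_periodic:
  fixes c :: "nat \<Rightarrow> int"
  assumes p: "prime p"
    and vanish: "(\<Sum>i<p * p ^ k. of_int (c i) * unit_root (p * p ^ k) 1 ^ i) = 0"
    and j: "j + p ^ k < p * p ^ k"
  shows "c j = c (j + p ^ k)"
proof -
  define m where "m = p ^ k"
  have p0: "p > 0" and m0: "m > 0" using p by (auto simp: m_def prime_gt_0_nat)
  define P where "P = (\<Sum>i<p * m. monom (c i) i)"
  have coeff_P: "coeff P i = (if i < p * m then c i else 0)" for i
    unfolding P_def coeff_sum by (simp add: coeff_monom sum.delta)
  have "ipoly P (unit_root (p * m) 1) = 0"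
    using vanish by (simp add: P_def m_def ipoly_sum ipoly_monom)
  then obtain Q where PQ: "P = cyclo p m * Q"
    using cyclo_dvd_if_ipoly_root[OF p] by (auto simp: m_def elim!: dvdE)
  have "coeff Q (j + m) = 0"
  proof (cases "Q = 0")
    case False
    have "degree P \<le> p * m - 1" by (rule degree_le) (auto simp: coeff_P)
    moreover have "cyclo p m \<noteq> 0" using lead_coeff_cyclo[OF m0 p0] by auto
    then have "degree P = (p - 1) * m + degree Q"
      using PQ False m0 p0 by (simp add: degree_mult_eq degree_cyclo)
    moreover have "p * m = (p - 1) * m + m" using p0 by (metis Suc_diff_1 add.commute mult_Suc)
    ultimately have "degree Q < m" using m0 by linarith
    then show ?thesis by (simp add: coeff_eq_0)
  qed simp
  moreover have "(monom 1 m - 1) * P = (monom 1 (p * m) - 1) * Q"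
    unfolding PQ cyclo_times_monom_minus_1[symmetric] by (simp only: mult_ac)
  then have "coeff ((monom 1 m - 1) * P) (j + m) = coeff ((monom 1 (p * m) - 1) * Q) (j + m)"
    by simp
  ultimately show ?thesis
    using j by (simp add: m_def left_diff_distrib coeff_monom_mult coeff_P)
qed

lemma vanishing_unit_root_sum_fibres_periodic:
  assumes p: "prime p" and X: "finite X"
    and vanish: "(\<Sum>x\<in>X. unit_root (p * p ^ k) (f x)) = 0"
    and bound: "r + t * p ^ k < p * p ^ k"
  shows "card {x\<in>X. f x mod int (p * p ^ k) = int (r + t * p ^ k)} =
    card {x\<in>X. f x mod int (p * p ^ k) = int r}"
  using bound
proof (induction t)
  case (Suc t)
  define c where "c i = int (card {x\<in>X. f x mod int (p * p ^ k) = int i})" for i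
  have "p * p ^ k > 0" using p by (simp add: prime_gt_0_nat)
  then have "(\<Sum>i<p * p ^ k. of_int (c i) * unit_root (p * p ^ k) 1 ^ i) = 0"
    using vanish sum_unit_root_by_residues[OF _ X, of "p * p ^ k" f] by (simp add: c_def)
  then have "c (r + t * p ^ k) = c (r + t * p ^ k + p ^ k)"
    using Suc.prems by (intro vanishing_unit_root_sum_periodic[OF p]) (simp_all add: algebra_simps)
  with Suc show ?case by (simp add: c_def algebra_simps)
qed simp

lemma sum_prime_unit_roots_neq_0:
  assumes p: "prime p" and X: "finite X" "card X = p"
    and a: "a \<in> X" "a' \<in> X" "a \<noteq> a'" "f a = f a'"
  shows "(\<Sum>x\<in>X. unit_root p (f x)) \<noteq> 0"
proof
  assume vanish: "(\<Sum>x\<in>X. unit_root p (f x)) = 0"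
  have p0: "p > 0" using p prime_gt_0_nat by blast
  define c where "c i = card {x\<in>X. f x mod int p = int i}" for i
  have const: "c i = c 0" if "i < p" for i
    using vanishing_unit_root_sum_fibres_periodic[OF p X(1), of 0 f 0 i] vanish that
    by (simp add: c_def)
  have "p = (\<Sum>i<p. c i)" using sum_card_residue_fibres[OF p0 X(1)] X(2) by (simp add: c_def)
  also have "\<dots> = (\<Sum>i<p. c 0)" by (intro sum.cong refl const) simp
  also have "\<dots> = p * c 0" by simp
  finally have "c 0 = 1" using p0 by simp
  moreover have "nat (f a mod int p) < p" using p0 by (simp add: nat_less_iff)
  then have "c (nat (f a mod int p)) = c 0" by (rule const)
  moreover have "c (nat (f a mod int p)) \<ge> 2"
    unfolding c_def by (rule card_residue_fibre_ge_2[OF X(1) p0 a])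
  ultimately show False by simp
qed

lemma sum_card_fibres_mod_square_le:
  assumes X: "finite X" and p: "p > 0" and r: "r < p"
  shows "(\<Sum>t<p. card {x\<in>X. f x mod int (p\<^sup>2) = int (r + t * p)}) \<le> card {x\<in>X. f x mod int p = int r}"
proof -
  have "(\<Union>t<p. {x\<in>X. f x mod int (p\<^sup>2) = int (r + t * p)}) \<subseteq> {x\<in>X. f x mod int p = int r}"
  proof
    fix x assume "x \<in> (\<Union>t<p. {x\<in>X. f x mod int (p\<^sup>2) = int (r + t * p)})"
    then obtain t where "x \<in> X" "f x mod int (p\<^sup>2) = int (r + t * p)" by blast
    moreover have "f x mod int p = (f x mod int (p\<^sup>2)) mod int p"
      by (simp add: mod_mod_cancel power2_eq_square)
    ultimately show "x \<in> {x\<in>X. f x mod int p = int r}"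
      using r by (simp flip: of_nat_mod)
  qed
  then have "card (\<Union>t<p. {x\<in>X. f x mod int (p\<^sup>2) = int (r + t * p)}) \<le> card {x\<in>X. f x mod int p = int r}"
    using X by (intro card_mono) auto
  then show ?thesis using X by (subst (asm) card_UN_disjoint) auto
qed

lemma sum_prime_square_unit_roots_neq_0:
  assumes p: "prime p" and X: "finite X"
    and fibres: "\<And>r. card {x\<in>X. f x mod int p = r} \<le> p"
    and a: "a \<in> X" "a' \<in> X" "a \<noteq> a'" "f a = f a'"
  shows "(\<Sum>x\<in>X. unit_root (p\<^sup>2) (f x)) \<noteq> 0"
proof
  assume vanish: "(\<Sum>x\<in>X. unit_root (p\<^sup>2) (f x)) = 0"
  have p0: "p > 0" using p prime_gt_0_nat by blast
  then have q0: "p\<^sup>2 > 0" by simp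
  define fibre where "fibre i = {x\<in>X. f x mod int (p\<^sup>2) = int i}" for i
  have shift: "card (fibre (r + t * p)) = card (fibre r)" if "r + t * p < p * p" for r t
    using vanishing_unit_root_sum_fibres_periodic[OF p X, of 1 f r t] vanish that
    by (simp add: fibre_def power2_eq_square)
  define j where "j = nat (f a mod int (p\<^sup>2))"
  define r where "r = j mod p"
  have "card (fibre j) \<ge> 2" unfolding fibre_def j_def by (rule card_residue_fibre_ge_2[OF X q0 a])
  have "j < p * p" using q0 by (simp add: j_def nat_less_iff power2_eq_square)
  then have "card (fibre r) = card (fibre j)" using shift[of r "j div p"] by (simp add: r_def)
  have card_fibre: "card (fibre (r + t * p)) = card (fibre j)" if "t < p" for t
  proof -
    have "r + t * p < p + t * p" using p0 by (simp add: r_def)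
    also have "\<dots> = Suc t * p" by simp
    also have "\<dots> \<le> p * p" using that by (intro mult_le_mono1) simp
    finally show ?thesis using shift[of r t] \<open>card (fibre r) = card (fibre j)\<close> by simp
  qed
  have "p * card (fibre j) = (\<Sum>t<p. card (fibre (r + t * p)))" using card_fibre by simp
  also have "\<dots> \<le> card {x\<in>X. f x mod int p = int r}"
    unfolding fibre_def using X p0 by (rule sum_card_fibres_mod_square_le) (simp add: r_def p0)
  also have "\<dots> \<le> p" by (rule fibres)
  finally show False using \<open>card (fibre j) \<ge> 2\<close> p0 by (simp add: mult_le_cancel1)
qed

section \<open>Symplectic characters and tilings of \<open>\<int>\<^sub>N \<times> \<int>\<^sub>N\<close>\<close>

lemma mem_grp_iff: "x \<in> grp N \<longleftrightarrow> 0 \<le> fst x \<and> fst x < int N \<and> 0 \<le> snd x \<and> snd x < int N"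
  by (cases x) (auto simp: grp_def)

lemma finite_grp [simp]: "finite (grp N)"
  unfolding grp_def by simp

lemma card_grp: "card (grp N) = N * N"
  by (simp add: grp_def card_cartesian_product)

lemma gadd_in_grp: "N > 0 \<Longrightarrow> gadd N x y \<in> grp N"
  by (simp add: mem_grp_iff gadd_def)

lemma grp_eqI:
  assumes "x \<in> grp N" "y \<in> grp N" "int N dvd fst x - fst y" "int N dvd snd x - snd y"
  shows "x = y"
proof -
  have "fst x mod int N = fst y mod int N" "snd x mod int N = snd y mod int N"
    using assms(3,4) by (simp_all add: mod_eq_dvd_iff)
  then show ?thesis using assms(1,2) by (simp add: mem_grp_iff prod_eq_iff)
qed

lemma gadd_eq_gadd_iff:
  "gadd N x y = gadd N x' y' \<longleftrightarrow>
    int N dvd (fst x + fst y) - (fst x' + fst y') \<and> int N dvd (snd x + snd y) - (snd x' + snd y')"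
  by (simp add: gadd_def prod_eq_iff mod_eq_dvd_iff)

lemma inj_on_gadd_left: "inj_on (gadd N x) (grp N)"
proof (rule inj_onI)
  fix u v assume uv: "u \<in> grp N" "v \<in> grp N" and "gadd N x u = gadd N x v"
  then have "int N dvd fst u - fst v" "int N dvd snd u - snd v"
    by (simp_all add: gadd_eq_gadd_iff)
  then show "u = v" by (rule grp_eqI[OF uv])
qed

lemma gadd_commute: "gadd N x y = gadd N y x"
  by (simp add: gadd_def add.commute)

lemma not_cong_if_grp_neq:
  assumes "s \<in> grp N" "t \<in> grp N" "s \<noteq> t"
  shows "\<not> (int N dvd fst (s - t) \<and> int N dvd snd (s - t))"
  using grp_eqI[OF assms(1,2)] assms(3) by auto

lemma schar_eq_unit_root: "schar N s a = unit_root N (symp a s)"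
  unfolding schar_def unit_root_def ..

lemma symp_diff_right: "symp x (a - b) = symp x a - symp x b"
  by (simp add: symp_def algebra_simps)

lemma symp_diff_self: "symp a (a - a') = symp a' (a - a')"
  by (simp add: symp_def algebra_simps)

lemma schar_mult_cnj: "schar N s b * cnj (schar N t b) = unit_root N (symp b (s - t))"
  by (simp add: schar_eq_unit_root symp_diff_right unit_root_diff)

lemma schar_mult_cnj_self: "schar N s a * cnj (schar N s a) = 1"
  by (simp add: schar_eq_unit_root)

definition symp_fourier :: "nat \<Rightarrow> (int \<times> int) set \<Rightarrow> int \<times> int \<Rightarrow> complex" where
  "symp_fourier N A d = (\<Sum>x\<in>A. unit_root N (symp x d))"

lemma symp_fourier_cong:
  assumes "N > 0" "int N dvd fst d - fst d'" "int N dvd snd d - snd d'"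
  shows "symp_fourier N A d = symp_fourier N A d'"
  unfolding symp_fourier_def
proof (intro sum.cong refl unit_root_cong[OF assms(1)])
  fix x
  have "symp x d - symp x d' = fst x * (snd d - snd d') - snd x * (fst d - fst d')"
    by (simp add: symp_def algebra_simps)
  then show "int N dvd symp x d - symp x d'" using assms(2,3) by simp
qed

lemma symp_gadd_left_cong: "int N dvd symp (gadd N x y) d - (symp x d + symp y d)"
proof -
  have "symp (gadd N x y) d - (symp x d + symp y d) =
      ((fst x + fst y) mod int N - (fst x + fst y)) * snd d
      - ((snd x + snd y) mod int N - (snd x + snd y)) * fst d"
    by (simp add: symp_def gadd_def algebra_simps)
  moreover have "int N dvd (fst x + fst y) mod int N - (fst x + fst y)"
    "int N dvd (snd x + snd y) mod int N - (snd x + snd y)"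
    by (simp_all add: mod_eq_dvd_iff[symmetric])
  ultimately show ?thesis by (metis dvd_diff dvd_mult2)
qed

lemma unit_root_symp_gadd_left:
  "N > 0 \<Longrightarrow> unit_root N (symp (gadd N x y) d) = unit_root N (symp x d) * unit_root N (symp y d)"
  using unit_root_cong[OF _ symp_gadd_left_cong] by (simp add: unit_root_add)

lemma unit_root_symp_gadd_right:
  assumes "N > 0"
  shows "unit_root N (symp d (gadd N x y)) = unit_root N (symp d x) * unit_root N (symp d y)"
proof -
  have swap: "symp u v = - symp v u" for u v by (simp add: symp_def)
  show ?thesis
    using unit_root_symp_gadd_left[OF assms, of x y d]
    by (simp add: swap[of d] unit_root_minus flip: complex_cnj_mult)
qed

lemma symp_fourier_grp_eq_0:
  assumes N: "N > 0" and d: "\<not> (int N dvd fst d \<and> int N dvd snd d)"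
  shows "symp_fourier N (grp N) d = 0"
proof -
  have "symp_fourier N (grp N) d =
      (\<Sum>g1\<in>{0..<int N}. \<Sum>g2\<in>{0..<int N}. unit_root N (symp (g1, g2) d))"
    unfolding grp_def symp_fourier_def by (simp add: sum.cartesian_product)
  also have "\<dots> =
      (\<Sum>g1\<in>{0..<int N}. \<Sum>g2\<in>{0..<int N}. unit_root N (g1 * snd d) * unit_root N (g2 * - fst d))"
    by (intro sum.cong refl) (simp add: symp_def algebra_simps flip: unit_root_add)
  also have "\<dots> = (\<Sum>g1\<in>{0..<int N}. unit_root N (g1 * snd d)) *
      (\<Sum>g2\<in>{0..<int N}. unit_root N (g2 * - fst d))"
    by (simp add: sum_product)
  also have "\<dots> = 0"
    using d sum_unit_root_multiples[OF N, of "snd d"] sum_unit_root_multiples[OF N, of "- fst d"]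
    by auto
  finally show ?thesis .
qed


lemma bij_betw_iff_ex1:
  assumes "f ` D \<subseteq> C"
  shows "bij_betw f D C \<longleftrightarrow> (\<forall>y\<in>C. \<exists>!x. x \<in> D \<and> f x = y)"
proof
  assume "bij_betw f D C"
  then have inj: "inj_on f D" and img: "f ` D = C" by (simp_all add: bij_betw_def)
  show "\<forall>y\<in>C. \<exists>!x. x \<in> D \<and> f x = y"
  proof
    fix y assume "y \<in> C"
    then obtain x where x: "x \<in> D" "y = f x" using img by blast
    show "\<exists>!x. x \<in> D \<and> f x = y"
    proof (rule ex1I[of _ x])
      show "x \<in> D \<and> f x = y" using x by simp
      show "x' = x" if "x' \<in> D \<and> f x' = y" for x'
        using inj_onD[OF inj, of x' x] x that by simp
    qed
  qed
next
  assume unique: "\<forall>y\<in>C. \<exists>!x. x \<in> D \<and> f x = y"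
  have "inj_on f D"
  proof (rule inj_onI)
    fix u v assume uv: "u \<in> D" "v \<in> D" "f u = f v"
    then have "\<exists>!x. x \<in> D \<and> f x = f u" using unique assms by blast
    from the1_equality[OF this, of u] the1_equality[OF this, of v] uv show "u = v" by simp
  qed
  moreover have "C \<subseteq> f ` D" using unique by blast
  ultimately show "bij_betw f D C" using assms by (simp add: bij_betw_def)
qed

lemma tiling_pair_iff_bij_betw:
  assumes N: "N > 0"
  shows "tiling_pair N A B \<longleftrightarrow> A \<subseteq> grp N \<and> B \<subseteq> grp N \<and>
    bij_betw (\<lambda>ab. gadd N (fst ab) (snd ab)) (A \<times> B) (grp N)"
proof -
  have "(\<lambda>ab. gadd N (fst ab) (snd ab)) ` (A \<times> B) \<subseteq> grp N" using gadd_in_grp[OF N] by blast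
  from bij_betw_iff_ex1[OF this] show ?thesis by (simp add: tiling_pair_def mem_Times_iff)
qed

lemma tiling_pair_card:
  assumes "N > 0" "tiling_pair N A B"
  shows "card A * card B = N * N"
proof -
  have "bij_betw (\<lambda>ab. gadd N (fst ab) (snd ab)) (A \<times> B) (grp N)"
    using assms tiling_pair_iff_bij_betw by blast
  then have "card (A \<times> B) = card (grp N)" by (rule bij_betw_same_card)
  then show ?thesis by (simp add: card_cartesian_product card_grp)
qed

lemma tiling_pair_symp_fourier:
  assumes N: "N > 0" and T: "tiling_pair N A B"
  shows "symp_fourier N (grp N) d = symp_fourier N A d * symp_fourier N B d"
proof -
  have "bij_betw (\<lambda>ab. gadd N (fst ab) (snd ab)) (A \<times> B) (grp N)"
    using T tiling_pair_iff_bij_betw[OF N] by blast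
  from sum.reindex_bij_betw[OF this, of "\<lambda>g. unit_root N (symp g d)"]
  have "(\<Sum>g\<in>grp N. unit_root N (symp g d)) =
      (\<Sum>ab\<in>A \<times> B. unit_root N (symp (gadd N (fst ab) (snd ab)) d))"
    by simp
  also have "\<dots> = (\<Sum>a\<in>A. unit_root N (symp a d)) * (\<Sum>b\<in>B. unit_root N (symp b d))"
    by (simp add: unit_root_symp_gadd_left[OF N] sum_product sum.cartesian_product case_prod_beta)
  finally show ?thesis by (simp only: symp_fourier_def)
qed

section \<open>Orthogonal bases of characters\<close>

lemma sum_expansion_times_cnj:
  fixes ch :: "'a \<Rightarrow> 'b \<Rightarrow> complex"
  assumes X: "finite X" and t: "t \<in> X"
    and unit: "\<And>s b. ch s b * cnj (ch s b) = 1"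
    and ortho: "\<And>s t. s \<in> X \<Longrightarrow> t \<in> X \<Longrightarrow> s \<noteq> t \<Longrightarrow> (\<Sum>b\<in>Y. ch s b * cnj (ch t b)) = 0"
  shows "(\<Sum>b\<in>Y. (\<Sum>s\<in>X. c s * ch s b) * cnj (ch t b)) = c t * of_nat (card Y)"
proof -
  have "(\<Sum>b\<in>Y. (\<Sum>s\<in>X. c s * ch s b) * cnj (ch t b)) =
      (\<Sum>b\<in>Y. \<Sum>s\<in>X. c s * (ch s b * cnj (ch t b)))"
    by (simp add: sum_distrib_right mult.assoc)
  also have "\<dots> = (\<Sum>s\<in>X. c s * (\<Sum>b\<in>Y. ch s b * cnj (ch t b)))"
    by (simp add: sum.swap[of _ Y] sum_distrib_left)
  also have "\<dots> = (\<Sum>s\<in>X. if s = t then c t * of_nat (card Y) else 0)"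
    by (intro sum.cong refl) (auto simp: ortho t unit)
  also have "\<dots> = c t * of_nat (card Y)" using X t by simp
  finally show ?thesis .
qed

lemma sum_norm_square_column_products:
  fixes ch :: "'a \<Rightarrow> 'b \<Rightarrow> complex"
  assumes X: "finite X"
    and unit: "\<And>s b. ch s b * cnj (ch s b) = 1"
    and ortho: "\<And>s t. s \<in> X \<Longrightarrow> t \<in> X \<Longrightarrow> s \<noteq> t \<Longrightarrow> (\<Sum>b\<in>Y. ch s b * cnj (ch t b)) = 0"
  shows "(\<Sum>b\<in>Y. (cmod (\<Sum>s\<in>X. ch s b * cnj (ch s c)))\<^sup>2) = real (card X * card Y)"
proof -
  define K where "K b = (\<Sum>s\<in>X. ch s b * cnj (ch s c))" for b
  have "(\<Sum>b\<in>Y. K b * cnj (K b)) =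
      (\<Sum>t\<in>X. (\<Sum>b\<in>Y. (\<Sum>s\<in>X. cnj (ch s c) * ch s b) * cnj (ch t b)) * ch t c)"
  proof -
    have "(\<Sum>b\<in>Y. K b * cnj (K b)) =
        (\<Sum>b\<in>Y. \<Sum>t\<in>X. (\<Sum>s\<in>X. cnj (ch s c) * ch s b) * cnj (ch t b) * ch t c)"
      unfolding K_def by (simp add: cnj_sum sum_distrib_left mult_ac)
    then show ?thesis by (simp add: sum.swap[of _ Y] sum_distrib_right)
  qed
  also have "\<dots> = (\<Sum>t\<in>X. cnj (ch t c) * of_nat (card Y) * ch t c)"
  proof (intro sum.cong refl)
    fix t assume "t \<in> X"
    have "(\<Sum>b\<in>Y. (\<Sum>s\<in>X. cnj (ch s c) * ch s b) * cnj (ch t b)) = cnj (ch t c) * of_nat (card Y)"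
      by (rule sum_expansion_times_cnj[OF X \<open>t \<in> X\<close> unit ortho])
    then show "(\<Sum>b\<in>Y. (\<Sum>s\<in>X. cnj (ch s c) * ch s b) * cnj (ch t b)) * ch t c =
        cnj (ch t c) * of_nat (card Y) * ch t c" by simp
  qed
  also have "\<dots> = of_nat (card X * card Y)"
    using unit by (simp add: mult.commute mult.left_commute)
  finally have "(\<Sum>b\<in>Y. K b * cnj (K b)) = of_nat (card X * card Y)" .
  moreover have "K b * cnj (K b) = of_real ((cmod (K b))\<^sup>2)" for b
    by (rule complex_norm_square[symmetric])
  ultimately have "of_real (\<Sum>b\<in>Y. (cmod (K b))\<^sup>2) = (of_nat (card X * card Y) :: complex)"
    by simp
  then have "(\<Sum>b\<in>Y. (cmod (K b))\<^sup>2) = real (card X * card Y)"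
    by (metis of_real_eq_iff of_real_of_nat_eq)
  then show ?thesis by (simp only: K_def)
qed

lemma orthogonal_columns_if_orthogonal_rows:
  fixes ch :: "'a \<Rightarrow> 'b \<Rightarrow> complex"
  assumes X: "finite X" and Y: "finite Y" and card: "card X = card Y"
    and unit: "\<And>s b. ch s b * cnj (ch s b) = 1"
    and ortho: "\<And>s t. s \<in> X \<Longrightarrow> t \<in> X \<Longrightarrow> s \<noteq> t \<Longrightarrow> (\<Sum>b\<in>Y. ch s b * cnj (ch t b)) = 0"
    and b: "b0 \<in> Y" "b1 \<in> Y" "b1 \<noteq> b0"
  shows "(\<Sum>s\<in>X. ch s b1 * cnj (ch s b0)) = 0"
proof -
  define K where "K b = (\<Sum>s\<in>X. ch s b * cnj (ch s b0))" for b
  have "K b0 = of_nat (card X)" unfolding K_def using unit by simp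
  moreover have "(\<Sum>b\<in>Y. (cmod (K b))\<^sup>2) = real (card X * card Y)"
    unfolding K_def by (rule sum_norm_square_column_products[where ch = ch, OF X unit ortho])
  (* Since |X| = |Y|, the term b = b0 alone already exhausts the total |X| |Y|. *)
  ultimately have "(\<Sum>b\<in>Y - {b0}. (cmod (K b))\<^sup>2) = 0"
    using Y b(1) card by (simp add: sum.remove power2_eq_square)
  then have "(cmod (K b1))\<^sup>2 = 0" using Y b by (simp add: sum_nonneg_eq_0_iff)
  then show ?thesis by (simp add: K_def)
qed

lemma symp_spectral_pairI:
  assumes Y: "Y \<subseteq> grp N" and X: "X \<subseteq> grp N" and card: "card X = card Y"
    and ortho: "\<And>s t. s \<in> X \<Longrightarrow> t \<in> X \<Longrightarrow> s \<noteq> t \<Longrightarrow>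
      (\<Sum>b\<in>Y. schar N s b * cnj (schar N t b)) = 0"
  shows "symp_spectral_pair N Y X"
proof -
  have fX: "finite X" and fY: "finite Y"
    using finite_subset[OF X] finite_subset[OF Y] by simp_all
  note expand = sum_expansion_times_cnj[where ch = "schar N", OF fX _ schar_mult_cnj_self ortho]
  have independent: "\<forall>s\<in>X. c s = 0" if "\<forall>b\<in>Y. (\<Sum>s\<in>X. c s * schar N s b) = 0" for c
  proof
    fix t assume t: "t \<in> X"
    then have "card Y > 0" using card fX card_gt_0_iff by fastforce
    moreover have "c t * of_nat (card Y) = 0" using expand[OF t, where c = c] that by simp
    ultimately show "c t = 0" by simp
  qed
  have columns: "(\<Sum>s\<in>X. cnj (schar N s b) * cnj (cnj (schar N s b'))) = 0"
    if "b \<in> Y" "b' \<in> Y" "b \<noteq> b'" for b b'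
  proof -
    have "(\<Sum>s\<in>X. schar N s b * cnj (schar N s b')) = 0"
      using orthogonal_columns_if_orthogonal_rows[where ch = "schar N",
          OF fX fY card schar_mult_cnj_self ortho that(2,1,3)] .
    from arg_cong[OF this, of cnj] show ?thesis by (simp add: cnj_sum)
  qed
  have spanning: "\<exists>c. \<forall>b\<in>Y. f b = (\<Sum>s\<in>X. c s * schar N s b)" for f :: "int \<times> int \<Rightarrow> complex"
  proof (intro exI ballI)
    fix b assume b: "b \<in> Y"
    then have "card X > 0" using card fY card_gt_0_iff by fastforce
    have "(\<Sum>s\<in>X. (\<Sum>b'\<in>Y. f b' / of_nat (card X) * cnj (schar N s b')) * cnj (cnj (schar N s b))) =
        f b / of_nat (card X) * of_nat (card X)"
      by (rule sum_expansion_times_cnj[where ch = "\<lambda>b s. cnj (schar N s b)", OF fY b _ columns])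
        (simp add: mult.commute schar_mult_cnj_self)
    with \<open>card X > 0\<close> show "f b = (\<Sum>s\<in>X. (\<Sum>b'\<in>Y. f b' / of_nat (card X) * cnj (schar N s b')) * schar N s b)"
      by simp
  qed
  show ?thesis
    unfolding symp_spectral_pair_def using Y X ortho independent spanning by blast
qed

lemma symp_spectral_pair_card:
  assumes sp: "symp_spectral_pair N A S" and a0: "a0 \<in> A"
  shows "card S = card A"
proof -
  have "A \<subseteq> grp N" "S \<subseteq> grp N" using sp by (simp_all add: symp_spectral_pair_def)
  then have "finite A" "finite S" by (meson finite_grp finite_subset)+
  have ortho: "\<And>s t. s \<in> S \<Longrightarrow> t \<in> S \<Longrightarrow> s \<noteq> t \<Longrightarrow> (\<Sum>a\<in>A. schar N s a * cnj (schar N t a)) = 0"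
    using sp by (simp add: symp_spectral_pair_def)
  define f :: "int \<times> int \<Rightarrow> complex" where "f a = (if a = a0 then 1 else 0)" for a
  obtain c where c: "\<forall>a\<in>A. f a = (\<Sum>s\<in>S. c s * schar N s a)"
    using sp unfolding symp_spectral_pair_def by meson
  have "card A > 0" using \<open>finite A\<close> a0 card_gt_0_iff by fastforce
  have c_eq: "c t = cnj (schar N t a0) / of_nat (card A)" if t: "t \<in> S" for t
  proof -
    have "cnj (schar N t a0) = (\<Sum>a\<in>A. if a = a0 then cnj (schar N t a) else 0)"
      using \<open>finite A\<close> a0 by simp
    also have "\<dots> = (\<Sum>a\<in>A. f a * cnj (schar N t a))"
      by (intro sum.cong) (simp_all add: f_def)
    also have "\<dots> = (\<Sum>a\<in>A. (\<Sum>s\<in>S. c s * schar N s a) * cnj (schar N t a))"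
      using c by simp
    also have "\<dots> = c t * of_nat (card A)"
      by (rule sum_expansion_times_cnj[where ch = "schar N", OF \<open>finite S\<close> t schar_mult_cnj_self ortho])
    finally show ?thesis using \<open>card A > 0\<close> by (simp add: eq_divide_eq)
  qed
  have "1 = f a0" by (simp add: f_def)
  also have "\<dots> = (\<Sum>s\<in>S. c s * schar N s a0)" using c a0 by simp
  also have "\<dots> = (\<Sum>s\<in>S. 1 / of_nat (card A))"
    by (intro sum.cong refl) (simp add: c_eq mult.commute schar_mult_cnj_self)
  finally have "1 = of_nat (card S) / (of_nat (card A) :: complex)" by simp
  with \<open>card A > 0\<close> show ?thesis by (simp add: eq_divide_eq)
qed

section \<open>Lagrangians\<close>

lemma lagrangian_dvd_symp: "lagrangian N H \<Longrightarrow> x \<in> H \<Longrightarrow> h \<in> H \<Longrightarrow> int N dvd symp x h"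
  unfolding lagrangian_def symp_perp_def by blast

lemma lagrangian_memI:
  "lagrangian N H \<Longrightarrow> g \<in> grp N \<Longrightarrow> (\<And>h. h \<in> H \<Longrightarrow> int N dvd symp g h) \<Longrightarrow> g \<in> H"
  unfolding lagrangian_def symp_perp_def by blast

lemma lagrangian_gadd_closed:
  assumes N: "N > 0" and L: "lagrangian N H" and "x \<in> H" "y \<in> H"
  shows "gadd N x y \<in> H"
proof (rule lagrangian_memI[OF L gadd_in_grp[OF N]])
  fix h assume "h \<in> H"
  then have "int N dvd symp x h + symp y h"
    using lagrangian_dvd_symp[OF L] \<open>x \<in> H\<close> \<open>y \<in> H\<close> by simp
  then show "int N dvd symp (gadd N x y) h"
    using symp_gadd_left_cong[of N x y h] by (metis dvd_add_left_iff diff_add_cancel)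
qed

lemma sum_lagrangian_unit_root_symp:
  assumes N: "N > 0" and L: "lagrangian N H" and g: "g \<in> grp N"
  shows "(\<Sum>h\<in>H. unit_root N (symp g h)) = (if g \<in> H then of_nat (card H) else 0)"
proof (cases "g \<in> H")
  case True
  then have "unit_root N (symp g h) = 1" if "h \<in> H" for h
    using that lagrangian_dvd_symp[OF L] unit_root_eq_1_iff[OF N] by simp
  with True show ?thesis by simp
next
  case False
  have H: "H \<subseteq> grp N" using L by (simp add: lagrangian_def)
  obtain h0 where h0: "h0 \<in> H" "\<not> int N dvd symp g h0"
    using lagrangian_memI[OF L g] False by blast
  have "inj_on (gadd N h0) H" using inj_on_gadd_left H by (rule inj_on_subset)
  moreover have "gadd N h0 ` H \<subseteq> H" using lagrangian_gadd_closed[OF N L h0(1)] by blast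
  ultimately have translate: "gadd N h0 ` H = H"
    using H finite_subset by (metis card_image card_subset_eq finite_grp)
  have "(\<Sum>h\<in>H. unit_root N (symp g h)) = (\<Sum>h\<in>H. unit_root N (symp g (gadd N h0 h)))"
    using sum.reindex[OF \<open>inj_on (gadd N h0) H\<close>, of "\<lambda>h. unit_root N (symp g h)"] translate
    by simp
  also have "\<dots> = unit_root N (symp g h0) * (\<Sum>h\<in>H. unit_root N (symp g h))"
    by (simp add: unit_root_symp_gadd_right[OF N] sum_distrib_left)
  finally have "(1 - unit_root N (symp g h0)) * (\<Sum>h\<in>H. unit_root N (symp g h)) = 0"
    by (simp add: algebra_simps)
  moreover have "unit_root N (symp g h0) \<noteq> 1" using h0(2) unit_root_eq_1_iff[OF N] by simp
  ultimately show ?thesis using False by simp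
qed

lemma card_lagrangian:
  assumes N: "N > 0" and L: "lagrangian N H"
  shows "card H = N"
proof -
  have H: "H \<subseteq> grp N" using L by (simp add: lagrangian_def)
  then have "finite H" by (rule finite_subset) simp
  have zero: "(0, 0) \<in> H"
    using N by (intro lagrangian_memI[OF L]) (simp_all add: mem_grp_iff symp_def)
  (* Sum e(<g, h>) over G x H: summing over h first gives |H|^2, over g first gives N^2. *)
  have "(\<Sum>g\<in>grp N. \<Sum>h\<in>H. unit_root N (symp g h)) = (\<Sum>g\<in>grp N. if g \<in> H then of_nat (card H) else 0)"
    by (intro sum.cong refl) (simp add: sum_lagrangian_unit_root_symp[OF N L])
  also have "\<dots> = of_nat (card H * card H)"
    using H by (simp add: sum.If_cases Int_absorb1)
  finally have "of_nat (card H * card H) = (\<Sum>h\<in>H. symp_fourier N (grp N) h)"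
    by (simp add: symp_fourier_def sum.swap[of _ "grp N"])
  also have "\<dots> = (\<Sum>h\<in>H. if h = (0, 0) then of_nat (N * N) else 0)"
  proof (intro sum.cong refl)
    fix h assume "h \<in> H"
    show "symp_fourier N (grp N) h = (if h = (0, 0) then of_nat (N * N) else 0)"
    proof (cases "h = (0, 0)")
      case False
      then have "\<not> (int N dvd fst h \<and> int N dvd snd h)"
        using not_cong_if_grp_neq[of h N "(0, 0)"] \<open>h \<in> H\<close> H N by (auto simp: mem_grp_iff)
      with False show ?thesis by (simp add: symp_fourier_grp_eq_0[OF N])
    qed (simp add: symp_fourier_def symp_def card_grp)
  qed
  also have "\<dots> = of_nat (N * N)" using \<open>finite H\<close> zero by simp
  finally have "card H * card H = N * N" by (simp only: of_nat_eq_iff)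
  then show ?thesis by (simp flip: power2_eq_square)
qed

section \<open>A criterion for tiling-spectral duality\<close>

lemma symp_spectral_pair_if_tiling_pair:
  assumes N: "N > 0" and A: "A \<subseteq> grp N" "card A = N"
    and nonzero: "\<And>a a'. a \<in> A \<Longrightarrow> a' \<in> A \<Longrightarrow> a \<noteq> a' \<Longrightarrow> symp_fourier N A (a - a') \<noteq> 0"
    and T: "tiling_pair N A B"
  shows "symp_spectral_pair N B A"
proof (rule symp_spectral_pairI)
  show "B \<subseteq> grp N" using T by (simp add: tiling_pair_def)
  show "A \<subseteq> grp N" by (fact A(1))
  show "card A = card B" using tiling_pair_card[OF N T] A(2) N by simp
  fix s t assume st: "s \<in> A" "t \<in> A" "s \<noteq> t"
  then have "symp_fourier N (grp N) (s - t) = 0"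
    using A(1) not_cong_if_grp_neq[of s N t] by (intro symp_fourier_grp_eq_0[OF N]) auto
  then have "symp_fourier N A (s - t) * symp_fourier N B (s - t) = 0"
    using tiling_pair_symp_fourier[OF N T] by simp
  with nonzero[OF st] have "symp_fourier N B (s - t) = 0" by simp
  then show "(\<Sum>b\<in>B. schar N s b * cnj (schar N t b)) = 0"
    by (simp add: schar_mult_cnj symp_fourier_def)
qed

lemma inj_on_gadd_if_symp_spectral_pair:
  assumes N: "N > 0" and A: "A \<subseteq> grp N"
    and nonzero: "\<And>a a'. a \<in> A \<Longrightarrow> a' \<in> A \<Longrightarrow> a \<noteq> a' \<Longrightarrow> symp_fourier N A (a - a') \<noteq> 0"
    and sp: "symp_spectral_pair N A S"
  shows "inj_on (\<lambda>ab. gadd N (fst ab) (snd ab)) (A \<times> S)"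
proof -
  have S: "S \<subseteq> grp N" using sp by (simp add: symp_spectral_pair_def)
  have unique: "a = a' \<and> s = s'"
    if as: "a \<in> A" "s \<in> S" "a' \<in> A" "s' \<in> S" and eq: "gadd N a s = gadd N a' s'"
    for a s a' s'
  proof (cases "s = s'")
    case True
    with eq have "gadd N s a = gadd N s a'" by (simp add: gadd_commute)
    then have "a = a'" by (rule inj_onD[OF inj_on_gadd_left]) (use as A in auto)
    with True show ?thesis by simp
  next
    case False
    have "a' \<noteq> a"
    proof
      assume "a' = a"
      with eq have "gadd N a s = gadd N a s'" by simp
      then have "s = s'" by (rule inj_onD[OF inj_on_gadd_left]) (use as S in auto)
      with False show False ..
    qed
    have "symp_fourier N A (s - s') = 0"
      using sp as False by (simp add: symp_spectral_pair_def schar_mult_cnj symp_fourier_def)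
    moreover have "symp_fourier N A (s - s') = symp_fourier N A (a' - a)"
      using eq N by (intro symp_fourier_cong) (simp_all add: gadd_eq_gadd_iff algebra_simps)
    ultimately show ?thesis using nonzero[OF as(3,1) \<open>a' \<noteq> a\<close>] by simp
  qed
  show ?thesis
  proof (rule inj_onI)
    fix u v assume "u \<in> A \<times> S" "v \<in> A \<times> S" "gadd N (fst u) (snd u) = gadd N (fst v) (snd v)"
    then show "u = v"
      using unique[of "fst u" "snd u" "fst v" "snd v"] by (simp add: mem_Times_iff prod_eq_iff)
  qed
qed

lemma tiling_pair_if_symp_spectral_pair:
  assumes N: "N > 0" and A: "A \<subseteq> grp N" "card A = N"
    and nonzero: "\<And>a a'. a \<in> A \<Longrightarrow> a' \<in> A \<Longrightarrow> a \<noteq> a' \<Longrightarrow> symp_fourier N A (a - a') \<noteq> 0"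
    and sp: "symp_spectral_pair N A S"
  shows "tiling_pair N A S"
proof -
  let ?sum = "\<lambda>ab. gadd N (fst ab) (snd ab)"
  have S: "S \<subseteq> grp N" using sp by (simp add: symp_spectral_pair_def)
  have "A \<noteq> {}" using A N by auto
  then obtain a0 where "a0 \<in> A" by blast
  then have "card S = N" using symp_spectral_pair_card[OF sp] A(2) by simp
  have inj: "inj_on ?sum (A \<times> S)"
    by (rule inj_on_gadd_if_symp_spectral_pair[OF N A(1) nonzero sp])
  moreover have "?sum ` (A \<times> S) = grp N"
  proof (rule card_subset_eq)
    show "?sum ` (A \<times> S) \<subseteq> grp N" using gadd_in_grp[OF N] by blast
    show "card (?sum ` (A \<times> S)) = card (grp N)"
      using card_image[OF inj] A(2) \<open>card S = N\<close> by (simp add: card_cartesian_product card_grp)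
  qed simp
  ultimately show ?thesis
    using tiling_pair_iff_bij_betw[OF N] A(1) S by (simp add: bij_betw_def)
qed

lemma tiling_spectral_dualI:
  assumes "N > 0" "A \<subseteq> grp N" "card A = N"
    and "\<And>a a'. a \<in> A \<Longrightarrow> a' \<in> A \<Longrightarrow> a \<noteq> a' \<Longrightarrow> symp_fourier N A (a - a') \<noteq> 0"
  shows "tiling_spectral_dual N A"
  unfolding tiling_spectral_dual_def
  using symp_spectral_pair_if_tiling_pair[OF assms] tiling_pair_if_symp_spectral_pair[OF assms]
  by blast

lemma lagrangian_tiling_spectral_dual:
  assumes N: "N > 0" and L: "lagrangian N A"
  shows "tiling_spectral_dual N A"
proof (rule tiling_spectral_dualI[OF N])
  show "A \<subseteq> grp N" using L by (simp add: lagrangian_def)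
  show "card A = N" by (rule card_lagrangian[OF N L])
  fix a a' assume "a \<in> A" "a' \<in> A"
  then have "unit_root N (symp x (a - a')) = 1" if "x \<in> A" for x
    using that lagrangian_dvd_symp[OF L] unit_root_eq_1_iff[OF N] by (simp add: symp_diff_right)
  then have "symp_fourier N A (a - a') = of_nat (card A)" by (simp add: symp_fourier_def)
  with \<open>card A = N\<close> N show "symp_fourier N A (a - a') \<noteq> 0" by simp
qed

lemma lagrangian_complement_tiling_spectral_dual:
  assumes p: "prime p" and L: "lagrangian p L" and T: "tiling_pair p A L"
  shows "tiling_spectral_dual p A"
proof -
  have p0: "p > 0" using p prime_gt_0_nat by blast
  have A: "A \<subseteq> grp p" using T by (simp add: tiling_pair_def)
  have "card A * p = p * p" using tiling_pair_card[OF p0 T] card_lagrangian[OF p0 L] by simp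
  then have "card A = p" using p0 by simp
  show ?thesis
  proof (rule tiling_spectral_dualI[OF p0 A \<open>card A = p\<close>])
    fix a a' assume aa': "a \<in> A" "a' \<in> A" "a \<noteq> a'"
    have "finite A" using A by (rule finite_subset) simp
    have "(\<Sum>x\<in>A. unit_root p (symp x (a - a'))) \<noteq> 0"
      by (rule sum_prime_unit_roots_neq_0[where f = "\<lambda>x. symp x (a - a')",
            OF p \<open>finite A\<close> \<open>card A = p\<close> aa' symp_diff_self])
    then show "symp_fourier p A (a - a') \<noteq> 0" by (simp add: symp_fourier_def)
  qed
qed

lemma card_multiples_grp_sq:
  assumes p: "p > 0"
  shows "card {x \<in> grp (p\<^sup>2). int p dvd fst x \<and> int p dvd snd x} = p\<^sup>2"
proof -
  define M where "M = {y. 0 \<le> y \<and> y < int (p\<^sup>2) \<and> int p dvd y}"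
  have "M = (\<lambda>i. int p * i) ` {0..<int p}"
  proof (intro set_eqI iffI)
    fix y assume "y \<in> M"
    then obtain i where y: "y = int p * i" "0 \<le> y" "y < int p * int p"
      by (auto simp: M_def power2_eq_square)
    then have "0 \<le> i" "i < int p" using p by (auto simp: zero_le_mult_iff)
    with y show "y \<in> (\<lambda>i. int p * i) ` {0..<int p}" by auto
  next
    fix y assume "y \<in> (\<lambda>i. int p * i) ` {0..<int p}"
    then obtain i where i: "y = int p * i" "0 \<le> i" "i < int p" by auto
    then have "int p * i < int p * int p" using p by simp
    with i show "y \<in> M" by (simp add: M_def power2_eq_square)
  qed
  then have "card M = p" using p by (simp add: card_image inj_on_def)
  moreover have "{x \<in> grp (p\<^sup>2). int p dvd fst x \<and> int p dvd snd x} = M \<times> M"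
    unfolding M_def grp_def by auto
  ultimately show ?thesis by (simp add: card_cartesian_product power2_eq_square)
qed

lemma eq_if_cong_mod_p_tiling_pair_multiples:
  fixes p :: nat
  defines "L \<equiv> {x \<in> grp (p\<^sup>2). int p dvd fst x \<and> int p dvd snd x}"
  assumes p: "p > 0" and T: "tiling_pair (p\<^sup>2) A L"
    and xy: "x \<in> A" "y \<in> A" "int p dvd fst x - fst y" "int p dvd snd x - snd y"
  shows "x = y"
proof -
  have q: "p\<^sup>2 > 0" using p by simp
  have "x \<in> grp (p\<^sup>2)" using T xy by (auto simp: tiling_pair_def)
  define l where "l = ((fst x - fst y) mod int (p\<^sup>2), (snd x - snd y) mod int (p\<^sup>2))"
  have "int p dvd int (p\<^sup>2)" by (simp add: power2_eq_square)
  then have "l \<in> L" using xy q by (simp add: L_def l_def mem_grp_iff dvd_mod_iff)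
  moreover have "(0, 0) \<in> L" using q by (simp add: L_def mem_grp_iff)
  moreover have "gadd (p\<^sup>2) x (0, 0) = x" "gadd (p\<^sup>2) y l = x"
    using \<open>x \<in> grp (p\<^sup>2)\<close> by (simp_all add: gadd_def mem_grp_iff l_def mod_add_right_eq)
  moreover have "inj_on (\<lambda>ab. gadd (p\<^sup>2) (fst ab) (snd ab)) (A \<times> L)"
    using T tiling_pair_iff_bij_betw[OF q] by (simp add: bij_betw_def)
  ultimately have "(x, (0, 0)) = (y, l)"
    using xy(1,2) by (intro inj_onD[of "\<lambda>ab. gadd (p\<^sup>2) (fst ab) (snd ab)" "A \<times> L"]) simp_all
  then show "x = y" by simp
qed

lemma card_symp_residue_fibre_le:
  fixes p :: nat and A :: "(int \<times> int) set"
  assumes p: "prime p" and A: "finite A"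
    and inj: "\<And>x y. x \<in> A \<Longrightarrow> y \<in> A \<Longrightarrow> int p dvd fst x - fst y \<Longrightarrow> int p dvd snd x - snd y \<Longrightarrow> x = y"
    and d: "\<not> (int p dvd fst d \<and> int p dvd snd d)"
  shows "card {x\<in>A. symp x d mod int p = r} \<le> p"
proof -
  define F where "F = {x\<in>A. symp x d mod int p = r}"
  (* Modulo p, a line <x, d> = r with d <> 0 is a graph over one of the axes. *)
  define coord where "coord x = (if int p dvd fst d then snd x else fst x) mod int p" for x :: "int \<times> int"
  have "prime (int p)" using p by simp
  have "inj_on coord F"
  proof (rule inj_onI)
    fix x y assume x: "x \<in> F" and y: "y \<in> F" and "coord x = coord y"
    have "symp x d mod int p = symp y d mod int p" using x y by (simp add: F_def)
    then have "int p dvd symp x d - symp y d" by (simp add: mod_eq_dvd_iff)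
    moreover have "symp x d - symp y d = (fst x - fst y) * snd d - (snd x - snd y) * fst d"
      by (simp add: symp_def algebra_simps)
    ultimately have diff: "int p dvd (fst x - fst y) * snd d - (snd x - snd y) * fst d" by simp
    show "x = y"
    proof (cases "int p dvd fst d")
      case True
      with \<open>coord x = coord y\<close> have "int p dvd snd x - snd y" by (simp add: coord_def mod_eq_dvd_iff)
      then have "int p dvd (snd x - snd y) * fst d" by (rule dvd_mult2)
      from dvd_add[OF diff this] have "int p dvd (fst x - fst y) * snd d" by simp
      with True d \<open>prime (int p)\<close> have "int p dvd fst x - fst y" by (simp add: prime_dvd_mult_iff)
      with \<open>int p dvd snd x - snd y\<close> show ?thesis using inj x y by (simp add: F_def)
    next
      case False
      with \<open>coord x = coord y\<close> have "int p dvd fst x - fst y" by (simp add: coord_def mod_eq_dvd_iff)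
      then have "int p dvd (fst x - fst y) * snd d" by (rule dvd_mult2)
      from dvd_diff[OF this diff] have "int p dvd (snd x - snd y) * fst d" by simp
      with False \<open>prime (int p)\<close> have "int p dvd snd x - snd y" by (simp add: prime_dvd_mult_iff)
      with \<open>int p dvd fst x - fst y\<close> show ?thesis using inj x y by (simp add: F_def)
    qed
  qed
  then have "card F = card (coord ` F)" by (simp add: card_image)
  also have "\<dots> \<le> card {0..<int p}"
    using p by (intro card_mono) (auto simp: coord_def prime_gt_0_nat)
  finally show ?thesis by (simp add: F_def)
qed

lemma multiples_complement_tiling_spectral_dual:
  fixes p :: nat
  defines "L \<equiv> {x \<in> grp (p\<^sup>2). int p dvd fst x \<and> int p dvd snd x}"
  assumes p: "prime p" and T: "tiling_pair (p\<^sup>2) A L"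
  shows "tiling_spectral_dual (p\<^sup>2) A"
proof -
  have p0: "p > 0" using p prime_gt_0_nat by blast
  then have q: "p\<^sup>2 > 0" by simp
  have A: "A \<subseteq> grp (p\<^sup>2)" using T by (simp add: tiling_pair_def)
  then have "finite A" by (rule finite_subset) simp
  have "card A * p\<^sup>2 = p\<^sup>2 * p\<^sup>2"
    using tiling_pair_card[OF q T] card_multiples_grp_sq[OF p0] by (simp add: L_def)
  then have "card A = p\<^sup>2" by (rule mult_right_cancel[THEN iffD1, rotated]) (use q in simp)
  note inj = eq_if_cong_mod_p_tiling_pair_multiples[OF p0 T[unfolded L_def]]
  show ?thesis
  proof (rule tiling_spectral_dualI[OF q A \<open>card A = p\<^sup>2\<close>])
    fix a a' assume aa': "a \<in> A" "a' \<in> A" "a \<noteq> a'"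
    then have "\<not> (int p dvd fst (a - a') \<and> int p dvd snd (a - a'))" using inj[OF aa'(1,2)] by auto
    then have "card {x\<in>A. symp x (a - a') mod int p = r} \<le> p" for r
      by (intro card_symp_residue_fibre_le[OF p \<open>finite A\<close> inj])
    then have "(\<Sum>x\<in>A. unit_root (p\<^sup>2) (symp x (a - a'))) \<noteq> 0"
      by (rule sum_prime_square_unit_roots_neq_0[where f = "\<lambda>x. symp x (a - a')",
            OF p \<open>finite A\<close> _ aa' symp_diff_self])
    then show "symp_fourier (p\<^sup>2) A (a - a') \<noteq> 0" by (simp add: symp_fourier_def)
  qed
qed

theorem mainTheorem4:
  fixes p n :: nat and A :: "(int \<times> int) set"
  assumes "prime p" and "n \<ge> 1"
    and "lagrangian n A
         \<or> (A \<subseteq> grp p \<and> (\<exists>L. lagrangian p L \<and> tiling_pair p A L))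
         \<or> (A \<subseteq> grp (p^2) \<and>
            tiling_pair (p^2) A {x \<in> grp (p^2). int p dvd fst x \<and> int p dvd snd x})"
  shows "(lagrangian n A \<longrightarrow> tiling_spectral_dual n A)
       \<and> (A \<subseteq> grp p \<and> (\<exists>L. lagrangian p L \<and> tiling_pair p A L) \<longrightarrow> tiling_spectral_dual p A)
       \<and> (A \<subseteq> grp (p^2) \<and>
            tiling_pair (p^2) A {x \<in> grp (p^2). int p dvd fst x \<and> int p dvd snd x}
            \<longrightarrow> tiling_spectral_dual (p^2) A)"
proof (intro conjI impI)
  show "tiling_spectral_dual n A" if "lagrangian n A"
    using lagrangian_tiling_spectral_dual[OF _ that] \<open>n \<ge> 1\<close> by simp
  show "tiling_spectral_dual p A" if "A \<subseteq> grp p \<and> (\<exists>L. lagrangian p L \<and> tiling_pair p A L)"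
    using lagrangian_complement_tiling_spectral_dual[OF \<open>prime p\<close>] that by blast
  show "tiling_spectral_dual (p^2) A"
    if "A \<subseteq> grp (p^2) \<and> tiling_pair (p^2) A {x \<in> grp (p^2). int p dvd fst x \<and> int p dvd snd x}"
    using multiples_complement_tiling_spectral_dual[OF \<open>prime p\<close>] that by blast
qed

end
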